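(* Let $G$ be a cubic graph and let $J_1,J_2,J_3$ be three joins of $G$. For $i\in\{0,1,2,3\}$ let $E_i$ be the set of edges of $G$ contained in precisely $i$ of the sets $J_1,J_2,J_3$, and let $G_c=G[E_0\cup E_2\cup E_3]$ be the weak core of $G$ with respect to $J_1,J_2,J_3$. Then $G[E_0\cup E_2]$ is either an empty graph or a cycle.
   Context: A join of a graph $H$ is a set $J\subseteq E(H)$ such that every vertex has degree of the same parity in $H$ and in the spanning subgraph $(V(H),J)$. For $X\subseteq E(G)$, $G[X]$ denotes the subgraph induced by the edge set $X$. A cycle is a graph in which every vertex has even degree (equivalently, here, a union of edge-disjoint circuits). *)

theory Defs
  imports Main
begin

text \<open>Finite multigraphs (parallel edges and loops allowed).
  A loop (one end vertex) contributes 2 to the degree.\<close>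

definition multigraph :: "'v set \<Rightarrow> 'e set \<Rightarrow> ('e \<Rightarrow> 'v set) \<Rightarrow> bool" where
  "multigraph V E inc \<longleftrightarrow> finite V \<and> finite E \<and>
     (\<forall>e\<in>E. inc e \<subseteq> V \<and> (card (inc e) = 1 \<or> card (inc e) = 2))"

definition degree :: "('e \<Rightarrow> 'v set) \<Rightarrow> 'e set \<Rightarrow> 'v \<Rightarrow> nat" where
  "degree inc X v = (\<Sum>e\<in>{e\<in>X. v \<in> inc e}. if card (inc e) = 1 then 2 else 1)"

definition cubic :: "'v set \<Rightarrow> 'e set \<Rightarrow> ('e \<Rightarrow> 'v set) \<Rightarrow> bool" where
  "cubic V E inc \<longleftrightarrow> multigraph V E inc \<and> (\<forall>v\<in>V. degree inc E v = 3)"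

definition is_join :: "'v set \<Rightarrow> 'e set \<Rightarrow> ('e \<Rightarrow> 'v set) \<Rightarrow> 'e set \<Rightarrow> bool" where
  "is_join V E inc J \<longleftrightarrow> J \<subseteq> E \<and>
     (\<forall>v\<in>V. even (degree inc E v) \<longleftrightarrow> even (degree inc J v))"

definition mult3 :: "'e set \<Rightarrow> 'e set \<Rightarrow> 'e set \<Rightarrow> 'e \<Rightarrow> nat" where
  "mult3 J1 J2 J3 e = (if e \<in> J1 then 1 else 0) + (if e \<in> J2 then 1 else 0)
                      + (if e \<in> J3 then 1 else 0)"

definition edge_class :: "'e set \<Rightarrow> 'e set \<Rightarrow> 'e set \<Rightarrow> 'e set \<Rightarrow> nat \<Rightarrow> 'e set" where
  "edge_class E J1 J2 J3 i = {e\<in>E. mult3 J1 J2 J3 e = i}"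

text \<open>Edge-induced subgraph G[X]: vertex set = vertices incident with X, edge set X.\<close>
definition induced_verts :: "('e \<Rightarrow> 'v set) \<Rightarrow> 'e set \<Rightarrow> 'v set" where
  "induced_verts inc X = \<Union> (inc ` X)"

definition is_cycle :: "'v set \<Rightarrow> 'e set \<Rightarrow> ('e \<Rightarrow> 'v set) \<Rightarrow> bool" where
  "is_cycle W X inc \<longleftrightarrow> (\<forall>v\<in>W. even (degree inc X v))"

definition weak_core_edges :: "'e set \<Rightarrow> 'e set \<Rightarrow> 'e set \<Rightarrow> 'e set \<Rightarrow> 'e set" where
  "weak_core_edges E J1 J2 J3 =
     edge_class E J1 J2 J3 0 \<union> edge_class E J1 J2 J3 2 \<union> edge_class E J1 J2 J3 3"

end

theory Submission
  imports Defs
begin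

text \<open>An edge lies in an even number of the joins exactly when it lies in
  E \<triangle> J1 \<triangle> J2 \<triangle> J3, so the edge set of G[E0 \<union> E2] is this symmetric difference.
  Degree parities add under symmetric difference, and in a cubic graph every
  join has odd degree at every vertex; hence every vertex has degree parity
  3 + 1 + 1 + 1 \<equiv> 0 in G[E0 \<union> E2].\<close>

lemma degree_Un_disjoint:
  assumes "finite S" "finite T" "S \<inter> T = {}"
  shows "degree inc (S \<union> T) v = degree inc S v + degree inc T v"
proof -
  have "{e \<in> S \<union> T. v \<in> inc e} = {e \<in> S. v \<in> inc e} \<union> {e \<in> T. v \<in> inc e}" by auto
  then show ?thesis
    unfolding degree_def using assms by (simp add: sum.union_disjoint disjoint_iff)
qed

lemma even_degree_sym_diff:
  assumes "finite S" "finite T"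
  shows "even (degree inc (sym_diff S T) v) \<longleftrightarrow>
           (even (degree inc S v) \<longleftrightarrow> even (degree inc T v))"
proof -
  let ?d = "\<lambda>X. degree inc X v"
  have "?d ((S - T) \<union> (S \<inter> T)) = ?d (S - T) + ?d (S \<inter> T)"
    "?d ((T - S) \<union> (S \<inter> T)) = ?d (T - S) + ?d (S \<inter> T)"
    using assms by (intro degree_Un_disjoint; auto)+
  moreover have "(S - T) \<union> (S \<inter> T) = S" "(T - S) \<union> (S \<inter> T) = T" by auto
  ultimately have "?d S = ?d (S - T) + ?d (S \<inter> T)" "?d T = ?d (T - S) + ?d (S \<inter> T)"
    by simp_all
  moreover have "?d (sym_diff S T) = ?d (S - T) + ?d (T - S)"
    using assms by (intro degree_Un_disjoint) auto
  ultimately have "?d S + ?d T = ?d (sym_diff S T) + 2 * ?d (S \<inter> T)" by simp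
  then have "even (?d S + ?d T) \<longleftrightarrow> even (?d (sym_diff S T))" by simp
  then show ?thesis by auto
qed

lemma odd_degree_join_cubic:
  assumes "cubic V E inc" "is_join V E inc J" "v \<in> V"
  shows "odd (degree inc J v)"
  using assms unfolding cubic_def is_join_def by auto

lemma even_mult3_edge_classes_eq_sym_diff:
  assumes "J1 \<subseteq> E" "J2 \<subseteq> E" "J3 \<subseteq> E"
  shows "edge_class E J1 J2 J3 0 \<union> edge_class E J1 J2 J3 2
           = sym_diff (sym_diff (sym_diff E J1) J2) J3"
  using assms unfolding edge_class_def mult3_def by auto

lemma induced_verts_subset:
  assumes "multigraph V E inc" "X \<subseteq> E"
  shows "induced_verts inc X \<subseteq> V"
  using assms unfolding multigraph_def induced_verts_def by auto

theorem proposition2p2: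
  fixes V :: "'v set" and E :: "'e set" and inc :: "'e \<Rightarrow> 'v set"
    and J1 J2 J3 :: "'e set"
  assumes "cubic V E inc"
    and "is_join V E inc J1" and "is_join V E inc J2" and "is_join V E inc J3"
  shows "let X = edge_class E J1 J2 J3 0 \<union> edge_class E J1 J2 J3 2
         in X = {} \<or> is_cycle (induced_verts inc X) X inc"
proof -
  have mg: "multigraph V E inc" and "finite E"
    using assms(1) unfolding cubic_def multigraph_def by auto
  have J: "J1 \<subseteq> E" "J2 \<subseteq> E" "J3 \<subseteq> E"
    using assms(2-4) unfolding is_join_def by auto
  then have fin: "finite J1" "finite J2" "finite J3"
    using \<open>finite E\<close> finite_subset by blast+
  define X where "X = edge_class E J1 J2 J3 0 \<union> edge_class E J1 J2 J3 2"
  have X: "X = sym_diff (sym_diff (sym_diff E J1) J2) J3"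
    unfolding X_def using J by (rule even_mult3_edge_classes_eq_sym_diff)
  have "even (degree inc X v)" if "v \<in> V" for v
  proof -
    have "odd (degree inc E v)" using assms(1) that unfolding cubic_def by simp
    moreover have "odd (degree inc J1 v)" "odd (degree inc J2 v)" "odd (degree inc J3 v)"
      using odd_degree_join_cubic[OF assms(1) _ that] assms(2-4) by simp_all
    moreover have "finite (sym_diff E J1)" "finite (sym_diff (sym_diff E J1) J2)"
      using \<open>finite E\<close> fin by auto
    ultimately show ?thesis
      unfolding X using \<open>finite E\<close> fin
      by (simp only: even_degree_sym_diff) blast
  qed
  moreover have "X \<subseteq> E" unfolding X_def edge_class_def by auto
  ultimately have "is_cycle (induced_verts inc X) X inc"
    using induced_verts_subset[OF mg] unfolding is_cycle_def by blast
  then show ?thesis unfolding X_def Let_def by simp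
qed

end
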